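(* Let $\eta: V\to\omega\times\omega$, written $\eta(x)=(\eta_1(x),\eta_2(x))$, be such that $\eta_2$ is unbounded on $A_1$ and unbounded on each set $\{i\}\times\omega\subseteq A_2$, $i\in\omega$. Then there is no homomorphism $G_\eta\to G^1$.
   Context: Graphs are simple and loopless; homomorphisms are edge-preserving vertex maps. $G^1$ is the graph with vertex set $\omega\times\{0,1\}$ whose edges are all pairs $\{(n,i),(m,i)\}$ with $n\ne m$, $i\in\{0,1\}$, $\lfloor\sqrt n\rfloor=\lfloor\sqrt m\rfloor$, together with all pairs $\{(n,0),(m,1)\}$ with $n<m$. Fix finite graphs $G_{j,i}$ ($i,j\in\omega$), each with at least one vertex, such that $\chi(G_{j,i})\ge i$ and $G_{j,i}$ contains no odd cycle of length $\le j$. Let $T$ be the tree with vertex set $V=A_0\cup A_1\cup A_2$, $A_0=\{r\}$, $A_1=\omega$, $A_2=\omega\times\omega$, and edge set $E$ consisting of all pairs $\{r,i\}$ ($i\in\omega$) and $\{i,(i,j)\}$ ($i,j\in\omega$). For $\eta:V\to\omega\times\omega$, $G_\eta$ is the graph obtained by taking, for each $x\in V$, a vertex-disjoint copy $G^x$ of $G_{\eta(x)}$, and adding all edges $\{a,b\}$ with $a\in V(G^x)$, $b\in V(G^y)$ whenever $\{x,y\}\in E$. *)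

theory Defs
  imports Complex_Main
begin

definition simple_graph :: "'a set \<Rightarrow> ('a \<Rightarrow> 'a \<Rightarrow> bool) \<Rightarrow> bool" where
  "simple_graph V E \<longleftrightarrow>
     (\<forall>a b. E a b \<longrightarrow> a \<in> V \<and> b \<in> V) \<and> (\<forall>a b. E a b \<longrightarrow> E b a) \<and> (\<forall>a. \<not> E a a)"

definition graph_hom ::
  "'a set \<Rightarrow> ('a \<Rightarrow> 'a \<Rightarrow> bool) \<Rightarrow> 'b set \<Rightarrow> ('b \<Rightarrow> 'b \<Rightarrow> bool) \<Rightarrow> ('a \<Rightarrow> 'b) \<Rightarrow> bool" where
  "graph_hom V E W F f \<longleftrightarrow> (\<forall>a\<in>V. f a \<in> W) \<and> (\<forall>a b. E a b \<longrightarrow> F (f a) (f b))"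

definition colorable :: "'a set \<Rightarrow> ('a \<Rightarrow> 'a \<Rightarrow> bool) \<Rightarrow> nat \<Rightarrow> bool" where
  "colorable V E k \<longleftrightarrow> (\<exists>c. (\<forall>a\<in>V. c a < k) \<and> (\<forall>a\<in>V. \<forall>b\<in>V. E a b \<longrightarrow> c a \<noteq> c b))"

definition chromatic_number :: "'a set \<Rightarrow> ('a \<Rightarrow> 'a \<Rightarrow> bool) \<Rightarrow> nat" where
  "chromatic_number V E = (LEAST k. colorable V E k)"

definition has_cycle_of_length :: "'a set \<Rightarrow> ('a \<Rightarrow> 'a \<Rightarrow> bool) \<Rightarrow> nat \<Rightarrow> bool" where
  "has_cycle_of_length V E n \<longleftrightarrow>
     (\<exists>vs. length vs = n \<and> n \<ge> 3 \<and> distinct vs \<and> set vs \<subseteq> V \<and>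
        (\<forall>k. Suc k < n \<longrightarrow> E (vs ! k) (vs ! Suc k)) \<and> E (vs ! (n - 1)) (vs ! 0))"

definition G1_verts :: "(nat \<times> nat) set" where
  "G1_verts = UNIV \<times> {0, 1}"

definition G1_adj :: "nat \<times> nat \<Rightarrow> nat \<times> nat \<Rightarrow> bool" where
  "G1_adj p q \<longleftrightarrow> p \<in> G1_verts \<and> q \<in> G1_verts \<and>
     ((fst p \<noteq> fst q \<and> snd p = snd q \<and>
        \<lfloor>sqrt (real (fst p))\<rfloor> = \<lfloor>sqrt (real (fst q))\<rfloor>)
      \<or> (snd p = 0 \<and> snd q = 1 \<and> fst p < fst q)
      \<or> (snd q = 0 \<and> snd p = 1 \<and> fst q < fst p))"

text \<open>The tree T: root r, level A_1 = \<omega>, level A_2 = \<omega> \<times> \<omega>.\<close>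

datatype tvert = Root | L1 nat | L2 nat nat

fun tree_adj :: "tvert \<Rightarrow> tvert \<Rightarrow> bool" where
  "tree_adj Root (L1 i) = True"
| "tree_adj (L1 i) Root = True"
| "tree_adj (L1 i) (L2 i' j) = (i = i')"
| "tree_adj (L2 i' j) (L1 i) = (i = i')"
| "tree_adj _ _ = False"

text \<open>G_eta for the family G (indexed G j i = G_{j,i}): vertex (x,a) with a a vertex of
  G_{eta(x)}.\<close>

definition Geta_verts :: "(nat \<Rightarrow> nat \<Rightarrow> 'a set) \<Rightarrow> (tvert \<Rightarrow> nat \<times> nat) \<Rightarrow> (tvert \<times> 'a) set" where
  "Geta_verts GV \<eta> = {(x, a). a \<in> GV (fst (\<eta> x)) (snd (\<eta> x))}"

definition Geta_adj ::
  "(nat \<Rightarrow> nat \<Rightarrow> 'a set) \<Rightarrow> (nat \<Rightarrow> nat \<Rightarrow> 'a \<Rightarrow> 'a \<Rightarrow> bool) \<Rightarrow> (tvert \<Rightarrow> nat \<times> nat)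
     \<Rightarrow> tvert \<times> 'a \<Rightarrow> tvert \<times> 'a \<Rightarrow> bool" where
  "Geta_adj GV GE \<eta> p q \<longleftrightarrow> p \<in> Geta_verts GV \<eta> \<and> q \<in> Geta_verts GV \<eta> \<and>
     ((fst p = fst q \<and> GE (fst (\<eta> (fst p))) (snd (\<eta> (fst p))) (snd p) (snd q))
      \<or> tree_adj (fst p) (fst q))"

end

theory Submission
  imports Defs
begin

text \<open>A homomorphism into the loopless graph \<open>G\<^sup>1\<close> colours every copy \<open>G\<^sup>x\<close> properly, so its
  image has at least \<open>\<eta>\<^sub>2(x)\<close> points. A vertex \<open>(n, 1)\<close> of \<open>G\<^sup>1\<close> has only finitely many
  neighbours, so no vertex of a copy whose tree neighbours carry unbounded \<open>\<eta>\<^sub>2\<close> can go to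
  level 1; this applies to the root and to every \<open>i \<in> A\<^sub>1\<close>. Once the root sits at some
  \<open>(n, 0)\<close>, all copies over \<open>A\<^sub>1\<close> land among the finitely many level-0 neighbours of \<open>(n, 0)\<close>,
  contradicting the unboundedness of \<open>\<eta>\<^sub>2\<close> on \<open>A\<^sub>1\<close>.\<close>

lemma chromatic_number_le_card:
  assumes "finite W" and "g ` V \<subseteq> W"
    and "\<And>a b. a \<in> V \<Longrightarrow> b \<in> V \<Longrightarrow> E a b \<Longrightarrow> g a \<noteq> g b"
  shows "chromatic_number V E \<le> card W"
proof -
  obtain h where h: "bij_betw h W {0..<card W}"
    using ex_bij_betw_finite_nat[OF \<open>finite W\<close>] by blast
  have "colorable V E (card W)"
    unfolding colorable_def
  proof (intro exI[of _ "h \<circ> g"] conjI ballI impI)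
    fix a assume "a \<in> V"
    then show "(h \<circ> g) a < card W"
      using h assms(2) bij_betwE by fastforce
  next
    fix a b assume "a \<in> V" "b \<in> V" "E a b"
    then show "(h \<circ> g) a \<noteq> (h \<circ> g) b"
      using assms(2,3) bij_betw_imp_inj_on[OF h] by (metis comp_apply image_subset_iff inj_onD)
  qed
  then show ?thesis
    unfolding chromatic_number_def by (rule Least_le)
qed

definition sqrt_block :: "nat \<Rightarrow> nat set" where
  "sqrt_block n = {m. \<lfloor>sqrt (real m)\<rfloor> = \<lfloor>sqrt (real n)\<rfloor>}"

lemma finite_sqrt_block: "finite (sqrt_block n)"
proof (rule finite_subset)
  show "sqrt_block n \<subseteq> {..<2 * n + 2}"
  proof
    fix m assume "m \<in> sqrt_block n"
    then have "sqrt (real m) < sqrt (real n) + 1"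
      unfolding sqrt_block_def
      using real_of_int_floor_add_one_gt[of "sqrt (real m)"] of_int_floor_le[of "sqrt (real n)"]
      by (simp only: mem_Collect_eq)
    then have "real m < (sqrt (real n) + 1)\<^sup>2"
      by (metis real_sqrt_less_iff real_sqrt_unique add_nonneg_nonneg real_sqrt_ge_zero
          of_nat_0_le_iff zero_le_one)
    also have "\<dots> \<le> 2 * real n + 2"
      using sum_squares_bound[of "sqrt (real n)" 1] by (simp add: power2_eq_square algebra_simps)
    finally show "m \<in> {..<2 * n + 2}" by simp
  qed
qed simp

lemma G1_adj_irrefl: "\<not> G1_adj p p"
  by (simp add: G1_adj_def)

lemma finite_G1_neighbours_level1: "finite {q. G1_adj (n, 1) q}"
proof (rule finite_subset)
  show "{q. G1_adj (n, 1) q} \<subseteq> {..<n} \<times> {0} \<union> sqrt_block n \<times> {1}"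
    by (auto simp: G1_adj_def G1_verts_def sqrt_block_def)
  show "finite ({..<n} \<times> {0} \<union> sqrt_block n \<times> {1::nat})"
    using finite_sqrt_block by simp
qed

lemma finite_G1_level0_neighbours_level0: "finite {q. G1_adj (n, 0) q \<and> snd q = 0}"
proof (rule finite_subset)
  show "{q. G1_adj (n, 0) q \<and> snd q = 0} \<subseteq> sqrt_block n \<times> {0}"
    by (auto simp: G1_adj_def G1_verts_def sqrt_block_def)
  show "finite (sqrt_block n \<times> {0::nat})"
    using finite_sqrt_block by simp
qed

locale Geta_hom_G1 =
  fixes GV :: "nat \<Rightarrow> nat \<Rightarrow> 'a set"
    and GE :: "nat \<Rightarrow> nat \<Rightarrow> 'a \<Rightarrow> 'a \<Rightarrow> bool"
    and \<eta> :: "tvert \<Rightarrow> nat \<times> nat"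
    and f :: "tvert \<times> 'a \<Rightarrow> nat \<times> nat"
  assumes chromatic_number_ge: "\<And>j i. i \<le> chromatic_number (GV j i) (GE j i)"
    and hom: "graph_hom (Geta_verts GV \<eta>) (Geta_adj GV GE \<eta>) G1_verts G1_adj f"
begin

abbreviation copy_verts :: "tvert \<Rightarrow> 'a set" where
  "copy_verts x \<equiv> GV (fst (\<eta> x)) (snd (\<eta> x))"

lemma level_0_or_1:
  assumes "a \<in> copy_verts x"
  shows "snd (f (x, a)) = 0 \<or> snd (f (x, a)) = 1"
proof -
  have "f (x, a) \<in> G1_verts"
    using hom assms by (auto simp: graph_hom_def Geta_verts_def)
  then show ?thesis by (auto simp: G1_verts_def)
qed

lemma adj_across_tree_edge:
  assumes "tree_adj x y" "a \<in> copy_verts x" "b \<in> copy_verts y"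
  shows "G1_adj (f (x, a)) (f (y, b))"
proof -
  have "Geta_adj GV GE \<eta> (x, a) (y, b)"
    using assms by (simp add: Geta_adj_def Geta_verts_def)
  then show ?thesis
    using hom by (simp add: graph_hom_def)
qed

lemma snd_eta_le_card:
  assumes "finite W" "\<And>b. b \<in> copy_verts y \<Longrightarrow> f (y, b) \<in> W"
  shows "snd (\<eta> y) \<le> card W"
proof -
  have "chromatic_number (copy_verts y) (GE (fst (\<eta> y)) (snd (\<eta> y))) \<le> card W"
  proof (rule chromatic_number_le_card[where g = "\<lambda>b. f (y, b)"])
    fix a b assume "a \<in> copy_verts y" "b \<in> copy_verts y" "GE (fst (\<eta> y)) (snd (\<eta> y)) a b"
    then have "Geta_adj GV GE \<eta> (y, a) (y, b)"
      by (simp add: Geta_adj_def Geta_verts_def)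
    then have "G1_adj (f (y, a)) (f (y, b))"
      using hom by (simp add: graph_hom_def)
    then show "f (y, a) \<noteq> f (y, b)"
      using G1_adj_irrefl by metis
  qed (use assms in auto)
  then show ?thesis
    using chromatic_number_ge order_trans by blast
qed

lemma level_0_if_snd_eta_unbounded:
  assumes "a \<in> copy_verts x" and unbounded: "\<And>N. \<exists>y. tree_adj x y \<and> N < snd (\<eta> y)"
  shows "snd (f (x, a)) = 0"
proof (rule ccontr)
  assume "snd (f (x, a)) \<noteq> 0"
  then obtain n where n: "f (x, a) = (n, 1)"
    using level_0_or_1[OF assms(1)] by (metis prod.collapse)
  obtain y where y: "tree_adj x y" "card {q. G1_adj (n, 1) q} < snd (\<eta> y)"
    using unbounded by blast
  have "snd (\<eta> y) \<le> card {q. G1_adj (n, 1) q}"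
    using finite_G1_neighbours_level1 adj_across_tree_edge[OF y(1) assms(1)] n
    by (intro snd_eta_le_card) auto
  with y(2) show False by simp
qed

end

theorem claim4:
  fixes GV :: "nat \<Rightarrow> nat \<Rightarrow> nat set"
    and GE :: "nat \<Rightarrow> nat \<Rightarrow> nat \<Rightarrow> nat \<Rightarrow> bool"
    and \<eta> :: "tvert \<Rightarrow> nat \<times> nat"
  assumes fin: "\<And>j i. finite (GV j i)"
    and nonempty: "\<And>j i. GV j i \<noteq> {}"
    and simple: "\<And>j i. simple_graph (GV j i) (GE j i)"
    and chi: "\<And>j i. chromatic_number (GV j i) (GE j i) \<ge> i"
    and no_odd: "\<And>j i n. odd n \<Longrightarrow> n \<le> j \<Longrightarrow> \<not> has_cycle_of_length (GV j i) (GE j i) n"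
    and unb1: "\<forall>N. \<exists>i. snd (\<eta> (L1 i)) > N"
    and unb2: "\<forall>i N. \<exists>j. snd (\<eta> (L2 i j)) > N"
  shows "\<not> (\<exists>f. graph_hom (Geta_verts GV \<eta>) (Geta_adj GV GE \<eta>) G1_verts G1_adj f)"
proof
  assume "\<exists>f. graph_hom (Geta_verts GV \<eta>) (Geta_adj GV GE \<eta>) G1_verts G1_adj f"
  then obtain f where "Geta_hom_G1 GV GE \<eta> f"
    using chi by (auto intro: Geta_hom_G1.intro)
  then interpret Geta_hom_G1 GV GE \<eta> f .
  obtain a where a: "a \<in> copy_verts Root"
    using nonempty by blast
  obtain n where n: "f (Root, a) = (n, 0)"
    using level_0_if_snd_eta_unbounded[OF a] unb1 by (metis prod.collapse tree_adj.simps(1))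
  let ?W = "{q. G1_adj (n, 0) q \<and> snd q = 0}"
  obtain i where i: "card ?W < snd (\<eta> (L1 i))"
    using unb1 by blast
  have "snd (\<eta> (L1 i)) \<le> card ?W"
  proof (rule snd_eta_le_card[OF finite_G1_level0_neighbours_level0])
    fix b assume b: "b \<in> copy_verts (L1 i)"
    have "snd (f (L1 i, b)) = 0"
      using level_0_if_snd_eta_unbounded[OF b] unb2 by (metis tree_adj.simps(3))
    then show "f (L1 i, b) \<in> ?W"
      using adj_across_tree_edge[of Root "L1 i" a b] a b n by simp
  qed
  with i show False by simp
qed

end
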